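(* Let $n, r, d$ be positive integers with $n\geqslant r+1$ and $d\geqslant2$. Then $\mathcal{C}_r^d$ is a percolating set of $K_n^d$ in the $r$-neighbor bootstrap percolation process.
   Context: All graphs are finite, simple and undirected. For a nonnegative integer $r$ and a graph $G$, the $r$-neighbor bootstrap percolation process on $G$ starts with a set $A_0\subseteq V(G)$ of initially active vertices, and for $i\geqslant 1$, $A_i=A_{i-1}\cup\{v\in V(G) : |N(v)\cap A_{i-1}|\geqslant r\}$. The set $A_0$ is a percolating set if $\bigcup_{i\geqslant 0}A_i=V(G)$. $K_n^d$ has vertex set $[\![n]\!]^d$, where $[\![n]\!]=\{0,1,\ldots,n-1\}$, and two vertices are adjacent iff they differ in exactly one coordinate. Let $\delta=(d-2)/(d-1)$. For $t=(t_1,\ldots,t_d)\in\{0,1\}^d$ and $P\subseteq[\![n]\!]^d$, let $P(t)$ be the set of $(x_1,\ldots,x_d)\in[\![n]\!]^d$ for which there is $(p_1,\ldots,p_d)\in P$ with $x_i=t_i(n-1-p_i)+(1-t_i)p_i$ for all $i$. Let $A_r^d=\{(x_1,\ldots,x_d)\in[\![n]\!]^d : \sum_{i=1}^d x_i\leqslant\lceil r/2\rceil-1\}$, $B_r^d=\{(x_1,\ldots,x_d)\in[\![n]\!]^d : x_1+x_2+\delta\sum_{i=3}^d x_i<\delta(\lceil r/2\rceil-1)\}$, $C_r^d=A_r^d\setminus B_r^d$, $T=\{(t_1,\ldots,t_d)\in\{0,1\}^d : t_1=t_2\}$, and $\mathcal{C}_r^d=\bigcup_{t\in T}C_r^d(t)$.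 *)

theory Defs
  imports Complex_Main
begin

definition bp_step :: "'a set \<Rightarrow> ('a \<Rightarrow> 'a \<Rightarrow> bool) \<Rightarrow> nat \<Rightarrow> 'a set \<Rightarrow> 'a set" where
  "bp_step V adj r A = A \<union> {v \<in> V. card {u \<in> V. adj v u \<and> u \<in> A} \<ge> r}"

definition bp_iter :: "'a set \<Rightarrow> ('a \<Rightarrow> 'a \<Rightarrow> bool) \<Rightarrow> nat \<Rightarrow> 'a set \<Rightarrow> nat \<Rightarrow> 'a set" where
  "bp_iter V adj r A0 i = ((bp_step V adj r) ^^ i) A0"

definition percolating :: "'a set \<Rightarrow> ('a \<Rightarrow> 'a \<Rightarrow> bool) \<Rightarrow> nat \<Rightarrow> 'a set \<Rightarrow> bool" where
  "percolating V adj r A0 \<longleftrightarrow> A0 \<subseteq> V \<and> (\<Union>i. bp_iter V adj r A0 i) = V"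

definition hverts :: "nat \<Rightarrow> nat \<Rightarrow> nat list set" where
  "hverts n d = {x. length x = d \<and> (\<forall>i<d. x ! i < n)}"

definition hadj :: "nat \<Rightarrow> nat list \<Rightarrow> nat list \<Rightarrow> bool" where
  "hadj d x y \<longleftrightarrow> card {i. i < d \<and> x ! i \<noteq> y ! i} = 1"

section \<open>The sets A, B, C and the reflected union (coordinates 0-based)\<close>

definition delta :: "nat \<Rightarrow> real" where
  "delta d = (real d - 2) / (real d - 1)"

definition setA :: "nat \<Rightarrow> nat \<Rightarrow> nat \<Rightarrow> nat list set" where
  "setA n r d = {x \<in> hverts n d. real (\<Sum>i<d. x ! i) \<le> real_of_int \<lceil>real r / 2\<rceil> - 1}"

definition setB :: "nat \<Rightarrow> nat \<Rightarrow> nat \<Rightarrow> nat list set" where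
  "setB n r d = {x \<in> hverts n d.
     real (x ! 0) + real (x ! 1) + delta d * (\<Sum>i\<in>{2..<d}. real (x ! i))
       < delta d * (real_of_int \<lceil>real r / 2\<rceil> - 1)}"

definition setC :: "nat \<Rightarrow> nat \<Rightarrow> nat \<Rightarrow> nat list set" where
  "setC n r d = setA n r d - setB n r d"

definition reflect :: "nat \<Rightarrow> nat list \<Rightarrow> nat list set \<Rightarrow> nat list set" where
  "reflect n t P = {x \<in> hverts n (length t). \<exists>p\<in>P. length p = length t \<and>
      (\<forall>i<length t. x ! i = t ! i * (n - 1 - p ! i) + (1 - t ! i) * p ! i)}"

definition Tset :: "nat \<Rightarrow> nat list set" where
  "Tset d = {t. length t = d \<and> (\<forall>i<d. t ! i \<le> 1) \<and> t ! 0 = t ! 1}"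

definition calC :: "nat \<Rightarrow> nat \<Rightarrow> nat \<Rightarrow> nat list set" where
  "calC n r d = (\<Union>t\<in>Tset d. reflect n t (setC n r d))"

end

theory Submission
  imports Defs
begin

(*
  Write c = ceil(r/2) - 1 (called rad below); then r <= 2c + 2 <= n, so a vertex with 2c + 2
  active neighbours becomes active.

  First, every vertex within l1-distance c of a corner t in T becomes active. Reflecting it to
  the origin gives a point p of A. If p is not in B, it lies in C. Otherwise let g be the slack
  of p in A and f = floor((p_1 + p_2) / (d - 2)), which is smaller than g. Raising p_1 or p_2 by
  at most g, lowering some p_i with i >= 3, or raising it by between g - f and g, in the latter
  two cases at either end of the range since t_i is free for i >= 3, gives
  2g + 2(p_3 + ... + p_d) + 2(d - 2)(f + 1) >= 2c + 2 neighbours. Each of them lies in C or is a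
  point of A with larger p_1 + p_2, or with equal p_1 + p_2 and smaller p_3 + ... + p_d.

  Second, every vertex becomes active, by induction on the total distance of its coordinates to
  the ends of the range. If this distance exceeds c, the neighbours closer to the ends suffice.
  Otherwise, if the first two coordinates are near the same end, the vertex is near a corner in T.
  If they are near opposite ends, each of them can be moved either closer to its end or so far
  towards the other end that the vertex becomes near a corner in T; together with the moves in
  the other coordinates this again gives 2c + 2 active neighbours.
*)

section \<open>Bootstrap percolation closure\<close>

definition bp_closure :: "'a set \<Rightarrow> ('a \<Rightarrow> 'a \<Rightarrow> bool) \<Rightarrow> nat \<Rightarrow> 'a set \<Rightarrow> 'a set" where
  "bp_closure V adj r A = (\<Union>i. bp_iter V adj r A i)"

lemma bp_iter_0 [simp]: "bp_iter V adj r A 0 = A"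
  by (simp add: bp_iter_def)

lemma bp_iter_Suc: "bp_iter V adj r A (Suc i) = bp_step V adj r (bp_iter V adj r A i)"
  by (simp add: bp_iter_def)

lemma subset_bp_step: "A \<subseteq> bp_step V adj r A"
  by (simp add: bp_step_def)

lemma bp_iter_mono: "i \<le> j \<Longrightarrow> bp_iter V adj r A i \<subseteq> bp_iter V adj r A j"
  by (induction j rule: dec_induct) (use subset_bp_step in \<open>fastforce simp: bp_iter_Suc\<close>)+

lemma bp_iter_subset: "A \<subseteq> V \<Longrightarrow> bp_iter V adj r A i \<subseteq> V"
  by (induction i) (simp_all add: bp_iter_Suc bp_step_def)

lemma subset_bp_closure: "A \<subseteq> bp_closure V adj r A"
  unfolding bp_closure_def using UN_upper[of 0 UNIV "bp_iter V adj r A"] by simp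

lemma percolatingI:
  assumes "A \<subseteq> V" "V \<subseteq> bp_closure V adj r A"
  shows "percolating V adj r A"
  using assms bp_iter_subset[OF assms(1)] unfolding percolating_def bp_closure_def
  by (simp add: UN_least subset_antisym)

lemma bp_iter_chain: "chain\<^sub>\<subseteq> (range (bp_iter V adj r A))"
  unfolding chain_subset_def
proof (intro ballI)
  fix X Y assume "X \<in> range (bp_iter V adj r A)" "Y \<in> range (bp_iter V adj r A)"
  then obtain i j where "X = bp_iter V adj r A i" "Y = bp_iter V adj r A j"
    by blast
  then show "X \<subseteq> Y \<or> Y \<subseteq> X"
    using bp_iter_mono nat_le_linear by metis
qed

lemma bp_closure_activate:
  assumes "finite V" "x \<in> V" "N \<subseteq> {u \<in> V. adj x u}" "N \<subseteq> bp_closure V adj r A" "r \<le> card N"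
  shows "x \<in> bp_closure V adj r A"
proof -
  have "finite N"
    using assms(3) by (rule finite_subset) (use assms(1) in simp)
  moreover have "N \<subseteq> \<Union>(range (bp_iter V adj r A))"
    using assms(4) unfolding bp_closure_def .
  ultimately obtain m where m: "N \<subseteq> bp_iter V adj r A m"
    using finite_subset_Union_chain[OF _ _ _ bp_iter_chain[unfolded chain_subset_alt_def]] by blast
  have "card N \<le> card {u \<in> V. adj x u \<and> u \<in> bp_iter V adj r A m}"
    using assms m by (intro card_mono) auto
  then have "x \<in> bp_iter V adj r A (Suc m)"
    using assms by (auto simp: bp_iter_Suc bp_step_def)
  then show ?thesis
    unfolding bp_closure_def by blast
qed

section \<open>The Hamming graph\<close>

lemma finite_hverts: "finite (hverts n d)"
proof (rule finite_subset)
  show "hverts n d \<subseteq> {xs. set xs \<subseteq> {..<n} \<and> length xs = d}"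
    by (auto simp: hverts_def in_set_conv_nth)
qed (rule finite_lists_length_eq, simp)

lemma length_hverts: "x \<in> hverts n d \<Longrightarrow> length x = d"
  by (simp add: hverts_def)

lemma list_update_hverts: "x \<in> hverts n d \<Longrightarrow> v < n \<Longrightarrow> x[i:=v] \<in> hverts n d"
  by (cases "i < d") (auto simp: hverts_def nth_list_update)

lemma hadj_list_update:
  assumes "x \<in> hverts n d" "i < d" "v \<noteq> x!i"
  shows "hadj d x (x[i:=v])"
proof -
  have "{j. j < d \<and> x!j \<noteq> x[i:=v]!j} = {i}"
    using assms by (auto simp: nth_list_update length_hverts)
  then show ?thesis by (simp add: hadj_def)
qed

lemma hamming_bp_closure_activate:
  assumes x: "x \<in> hverts n d"
    and J: "\<And>i. i < d \<Longrightarrow> J i \<subseteq> {..<n} - {x!i}"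
    and J_closure: "\<And>i v. i < d \<Longrightarrow> v \<in> J i \<Longrightarrow> x[i:=v] \<in> bp_closure (hverts n d) (hadj d) r A"
    and r: "r \<le> (\<Sum>i<d. card (J i))"
  shows "x \<in> bp_closure (hverts n d) (hadj d) r A"
proof (rule bp_closure_activate[OF finite_hverts x])
  let ?N = "(\<lambda>(i, v). x[i:=v]) ` Sigma {..<d} J"
  have "inj_on (\<lambda>(i, v). x[i:=v]) (Sigma {..<d} J)"
  proof (rule inj_onI, clarsimp)
    fix i j v w assume ij: "i < d" "j < d" "v \<in> J i" "w \<in> J j" and eq: "x[i:=v] = x[j:=w]"
    then have "x[j:=w] ! i = v" "x[i:=v] ! j = w"
      using length_hverts[OF x] by (metis nth_list_update_eq)+
    moreover have "v \<noteq> x!i"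
      using J ij by blast
    ultimately have "i = j"
      by (metis nth_list_update_neq)
    then show "i = j \<and> v = w"
      using \<open>x[j:=w] ! i = v\<close> \<open>x[i:=v] ! j = w\<close> ij length_hverts[OF x] by simp
  qed
  moreover have "finite (J i)" if "i < d" for i
    using J[OF that] finite_subset by blast
  ultimately show "r \<le> card ?N"
    using r by (simp add: card_image card_SigmaI)
  show "?N \<subseteq> {u \<in> hverts n d. hadj d x u}"
    using J x by (auto intro!: list_update_hverts hadj_list_update)
  show "?N \<subseteq> bp_closure (hverts n d) (hadj d) r A"
    using J_closure by auto
qed

section \<open>Reflections of the sets A, B and C\<close>

lemma ceiling_half: "\<lceil>real r / 2\<rceil> = int ((r + 1) div 2)"
  by (simp add: ceiling_eq_iff) linarith

lemma sum_lessThan_split_two: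
  fixes h :: "nat \<Rightarrow> 'a::comm_monoid_add"
  assumes "2 \<le> d"
  shows "(\<Sum>i<d. h i) = h 0 + h 1 + (\<Sum>i\<in>{2..<d}. h i)"
proof -
  have "{..<d} = {0, 1} \<union> {2..<d}"
    using assms by auto
  then show ?thesis
    by (simp add: sum.union_disjoint add.assoc)
qed

lemma sum_nth_list_update:
  fixes h :: "'b \<Rightarrow> 'a::comm_monoid_add"
  assumes "i \<in> I" "finite I" "i < length p"
  shows "(\<Sum>j\<in>I. h (p[i:=v] ! j)) + h (p!i) = (\<Sum>j\<in>I. h (p!j)) + h v"
proof -
  have "(\<Sum>j\<in>I - {i}. h (p[i:=v] ! j)) = (\<Sum>j\<in>I - {i}. h (p!j))"
    by (rule sum.cong) auto
  then show ?thesis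
    using assms by (simp add: sum.remove add_ac)
qed

lemma Tset_list_update: "t \<in> Tset d \<Longrightarrow> 2 \<le> i \<Longrightarrow> b \<le> 1 \<Longrightarrow> t[i:=b] \<in> Tset d"
  by (cases "i < d") (auto simp: Tset_def nth_list_update)

locale hamming_percolation =
  fixes n r d :: nat
  assumes r_pos: "1 \<le> r" and r_less_n: "r + 1 \<le> n" and d_ge_2: "2 \<le> d"
begin

abbreviation infected :: "nat list set" where
  "infected \<equiv> bp_closure (hverts n d) (hadj d) r (calC n r d)"

definition rad :: nat where
  "rad = (r + 1) div 2 - 1"

lemma r_le_double_rad: "r \<le> 2 * rad + 2"
  using r_pos unfolding rad_def by linarith

lemma double_rad_less_n: "2 * rad + 2 \<le> n"
  using r_pos r_less_n unfolding rad_def by linarith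

lemma ceiling_half_r: "real_of_int \<lceil>real r / 2\<rceil> - 1 = real rad"
  using r_pos unfolding ceiling_half rad_def by (simp add: of_nat_diff)

definition front_sum :: "nat list \<Rightarrow> nat" where
  "front_sum p = p!0 + p!1"

definition back_sum :: "nat list \<Rightarrow> nat" where
  "back_sum p = (\<Sum>i\<in>{2..<d}. p!i)"

lemma front_sum_update_front: "i < 2 \<Longrightarrow> length p = d \<Longrightarrow> front_sum (p[i:=v]) + p!i = front_sum p + v"
  using d_ge_2 by (cases i) (auto simp: front_sum_def nth_list_update)

lemma front_sum_update_back: "2 \<le> i \<Longrightarrow> front_sum (p[i:=v]) = front_sum p"
  by (simp add: front_sum_def)

lemma back_sum_update_front: "i < 2 \<Longrightarrow> back_sum (p[i:=v]) = back_sum p"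
  unfolding back_sum_def by (rule sum.cong) auto

lemma back_sum_update_back:
  "2 \<le> i \<Longrightarrow> i < d \<Longrightarrow> length p = d \<Longrightarrow> back_sum (p[i:=v]) + p!i = back_sum p + v"
  unfolding back_sum_def using sum_nth_list_update[of i "{2..<d}" p "\<lambda>x. x" v] by simp

lemma nth_le_front_back_sum: "i < d \<Longrightarrow> p!i \<le> front_sum p + back_sum p"
proof (cases "i < 2")
  case False
  assume "i < d"
  then have "p!i \<le> back_sum p"
    using False unfolding back_sum_def by (intro member_le_sum) auto
  then show ?thesis by simp
qed (auto simp: front_sum_def less_2_cases_iff)

lemma mem_setA_iff: "p \<in> setA n r d \<longleftrightarrow> p \<in> hverts n d \<and> front_sum p + back_sum p \<le> rad"
  unfolding setA_def ceiling_half_r sum_lessThan_split_two[OF d_ge_2] front_sum_def back_sum_def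
  by (simp only: of_nat_le_iff mem_Collect_eq add.assoc)

lemma mem_setB_iff:
  "p \<in> setB n r d \<longleftrightarrow> p \<in> hverts n d \<and> (d - 1) * front_sum p + (d - 2) * back_sum p < (d - 2) * rad"
proof -
  define a w where "a = real (front_sum p)" and "w = real (back_sum p)"
  define D where "D = real d - 1"
  have "D > 0"
    using d_ge_2 unfolding D_def by simp
  then have "D * (a + (real d - 2) / D * w) = D * a + (real d - 2) * w"
      and "D * ((real d - 2) / D * rad) = (real d - 2) * rad"
    by (simp_all add: field_simps)
  then have "a + (real d - 2) / D * w < (real d - 2) / D * rad \<longleftrightarrow> D * a + (real d - 2) * w < (real d - 2) * rad"
    using mult_less_cancel_left_pos[OF \<open>D > 0\<close>] by metis
  also have "\<dots> \<longleftrightarrow> real ((d - 1) * front_sum p + (d - 2) * back_sum p) < real ((d - 2) * rad)"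
    using d_ge_2 unfolding a_def w_def D_def by (simp add: of_nat_diff)
  also have "\<dots> \<longleftrightarrow> (d - 1) * front_sum p + (d - 2) * back_sum p < (d - 2) * rad"
    by (rule of_nat_less_iff)
  finally show ?thesis
    unfolding setB_def ceiling_half_r back_sum_def a_def w_def D_def delta_def
    by (simp add: front_sum_def)
qed

definition slack :: "nat list \<Rightarrow> nat" where
  "slack p = rad - (front_sum p + back_sum p)"

lemma mem_setB_iff_slack:
  assumes "p \<in> setA n r d"
  shows "p \<in> setB n r d \<longleftrightarrow> front_sum p < (d - 2) * slack p"
proof -
  have "rad = front_sum p + back_sum p + slack p"
    using assms by (simp add: mem_setA_iff slack_def)
  moreover have "d - 1 = (d - 2) + 1"
    using d_ge_2 by simp
  ultimately show ?thesis
    using assms by (simp add: mem_setB_iff mem_setA_iff algebra_simps)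
qed

lemma nth_add_slack_le_rad: "p \<in> setA n r d \<Longrightarrow> i < d \<Longrightarrow> p!i + slack p \<le> rad"
  using nth_le_front_back_sum[of i p] by (simp add: mem_setA_iff slack_def)

lemma list_update_front_setA:
  assumes p: "p \<in> setA n r d" and i: "i < 2" and v: "p!i < v" "v \<le> p!i + slack p"
  shows "p[i:=v] \<in> setA n r d" and "front_sum p < front_sum (p[i:=v])"
proof -
  have "length p = d"
    using p by (simp add: mem_setA_iff hverts_def)
  then have "front_sum (p[i:=v]) + p!i = front_sum p + v" "back_sum (p[i:=v]) = back_sum p"
    using front_sum_update_front back_sum_update_front i by simp_all
  moreover have "v < n"
    using nth_add_slack_le_rad[OF p, of i] i v d_ge_2 double_rad_less_n by simp
  ultimately show "p[i:=v] \<in> setA n r d" and "front_sum p < front_sum (p[i:=v])"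
    using p v list_update_hverts[of p n d v i] unfolding mem_setA_iff slack_def by auto
qed

lemma list_update_back_setA:
  assumes p: "p \<in> setA n r d" and i: "2 \<le> i" "i < d" and v: "v < p!i"
  shows "p[i:=v] \<in> setA n r d" and "front_sum (p[i:=v]) = front_sum p"
    and "back_sum (p[i:=v]) < back_sum p"
proof -
  have "length p = d" "p!i < n"
    using p i by (simp_all add: mem_setA_iff hverts_def)
  then have "front_sum (p[i:=v]) = front_sum p" "back_sum (p[i:=v]) + p!i = back_sum p + v"
    using front_sum_update_back back_sum_update_back i by simp_all
  then show "p[i:=v] \<in> setA n r d" and "front_sum (p[i:=v]) = front_sum p"
    and "back_sum (p[i:=v]) < back_sum p"
    using p v \<open>p!i < n\<close> list_update_hverts[of p n d v i] unfolding mem_setA_iff by auto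
qed

lemma list_update_back_setC:
  assumes p: "p \<in> setA n r d" and i: "2 \<le> i" "i < d"
    and v: "p!i + slack p \<le> v + front_sum p div (d - 2)" "v \<le> p!i + slack p"
  shows "p[i:=v] \<in> setC n r d"
proof -
  let ?q = "p[i:=v]"
  have "length p = d"
    using p by (simp add: mem_setA_iff hverts_def)
  then have front: "front_sum ?q = front_sum p" and "back_sum ?q + p!i = back_sum p + v"
    using front_sum_update_back back_sum_update_back i by simp_all
  moreover have "v < n"
    using nth_add_slack_le_rad[OF p i(2)] v double_rad_less_n by simp
  ultimately have qA: "?q \<in> setA n r d" and "slack ?q \<le> front_sum p div (d - 2)"
    using p v list_update_hverts[of p n d v i] unfolding mem_setA_iff slack_def by auto
  from this(2) have "(d - 2) * slack ?q \<le> (d - 2) * (front_sum p div (d - 2))"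
    by (rule mult_le_mono2)
  also have "\<dots> \<le> front_sum ?q"
    using front by simp
  finally show ?thesis
    using qA mem_setB_iff_slack[OF qA] unfolding setC_def by simp
qed

lemma sum_card_back_values:
  assumes "f < g"
  shows "(\<Sum>i\<in>{2..<d}. card ({..<p!i} \<union> {p!i + g - f..p!i + g})) = back_sum p + (d - 2) * (f + 1)"
proof -
  have "(\<Sum>i\<in>{2..<d}. card ({..<p!i} \<union> {p!i + g - f..p!i + g})) = (\<Sum>i\<in>{2..<d}. p!i + (f + 1))"
    using assms by (intro sum.cong refl) (subst card_Un_disjoint, auto)
  also have "\<dots> = back_sum p + (d - 2) * (f + 1)"
    unfolding back_sum_def by (simp only: sum.distrib sum_constant card_atLeastLessThan of_nat_id distrib_left)
  finally show ?thesis .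
qed

lemma calC_subset_hverts: "calC n r d \<subseteq> hverts n d"
  by (auto simp: calC_def reflect_def Tset_def)

definition mirror_coord :: "nat \<Rightarrow> nat \<Rightarrow> nat" where
  "mirror_coord b v = (if b = 0 then v else n - 1 - v)"

definition mirror :: "nat list \<Rightarrow> nat list \<Rightarrow> nat list" where
  "mirror t p = map (\<lambda>i. mirror_coord (t!i) (p!i)) [0..<d]"

lemma length_mirror [simp]: "length (mirror t p) = d"
  by (simp add: mirror_def)

lemma nth_mirror [simp]: "i < d \<Longrightarrow> mirror t p ! i = mirror_coord (t!i) (p!i)"
  by (simp add: mirror_def)

lemma mirror_coord_less: "v < n \<Longrightarrow> mirror_coord b v < n"
  by (simp add: mirror_coord_def)

lemma mirror_coord_mirror_coord [simp]: "v < n \<Longrightarrow> mirror_coord b (mirror_coord b v) = v"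
  by (simp add: mirror_coord_def)

lemma mirror_coord_opposite: "b \<le> 1 \<Longrightarrow> v < n \<Longrightarrow> mirror_coord (1 - b) (mirror_coord b v) = n - 1 - v"
  by (auto simp: mirror_coord_def)

lemma inj_on_mirror_coord: "inj_on (mirror_coord b) {..<n}"
  by (rule inj_onI) (auto simp: mirror_coord_def split: if_splits)

lemma card_mirror_coord_image: "X \<subseteq> {..<n} \<Longrightarrow> card (mirror_coord b ` X) = card X"
  by (meson card_image inj_on_mirror_coord inj_on_subset)

lemma mirror_coord_opposite_neq:
  "b \<le> 1 \<Longrightarrow> v \<le> rad \<Longrightarrow> w \<le> rad \<Longrightarrow> mirror_coord (1 - b) v \<noteq> mirror_coord b w"
  using double_rad_less_n by (auto simp: mirror_coord_def)

lemma mirror_coord_image_subset: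
  assumes "X \<subseteq> {..<n}" "w < n" "w \<notin> X"
  shows "mirror_coord b ` X \<subseteq> {..<n} - {mirror_coord b w}"
proof
  fix v assume "v \<in> mirror_coord b ` X"
  then obtain x where "x \<in> X" "v = mirror_coord b x"
    by blast
  moreover have "mirror_coord b x \<noteq> mirror_coord b w"
    using assms \<open>x \<in> X\<close> inj_onD[OF inj_on_mirror_coord, of b x w] by auto
  ultimately show "v \<in> {..<n} - {mirror_coord b w}"
    using assms mirror_coord_less by auto
qed

lemma mirror_coord_two_sides_subset:
  assumes "b \<le> 1" "w \<le> rad" "K \<subseteq> {..rad} - {w}" "L \<subseteq> {..rad}"
  shows "mirror_coord b ` K \<union> mirror_coord (1 - b) ` L \<subseteq> {..<n} - {mirror_coord b w}"
proof -
  have "K \<subseteq> {..<n}" "w < n" "w \<notin> K"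
    using assms double_rad_less_n by auto
  then have "mirror_coord b ` K \<subseteq> {..<n} - {mirror_coord b w}"
    by (rule mirror_coord_image_subset)
  moreover have "mirror_coord (1 - b) v \<in> {..<n} - {mirror_coord b w}" if "v \<in> L" for v
  proof -
    have "v < n" "mirror_coord (1 - b) v \<noteq> mirror_coord b w"
      using assms that double_rad_less_n mirror_coord_opposite_neq[of b v w] by auto
    then show ?thesis
      using mirror_coord_less by simp
  qed
  ultimately show ?thesis
    by (simp add: image_subset_iff)
qed

lemma card_mirror_coord_two_sides:
  assumes "b \<le> 1" "K \<subseteq> {..rad}" "L \<subseteq> {..rad}"
  shows "card (mirror_coord b ` K \<union> mirror_coord (1 - b) ` L) = card K + card L"
proof -
  have "mirror_coord b v \<noteq> mirror_coord (1 - b) u" if "v \<in> K" "u \<in> L" for u v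
  proof -
    have "u \<le> rad" "v \<le> rad"
      using assms that by auto
    then show ?thesis
      using mirror_coord_opposite_neq[OF assms(1)] by metis
  qed
  then have "mirror_coord b ` K \<inter> mirror_coord (1 - b) ` L = {}"
    by (auto simp: image_iff)
  moreover have "finite K" "finite L" "K \<subseteq> {..<n}" "L \<subseteq> {..<n}"
    using assms double_rad_less_n finite_subset by auto
  ultimately show ?thesis
    by (simp add: card_Un_disjoint card_mirror_coord_image)
qed

lemma mirror_hverts: "p \<in> hverts n d \<Longrightarrow> mirror t p \<in> hverts n d"
  by (simp add: hverts_def mirror_coord_less)

lemma mirror_mirror: "p \<in> hverts n d \<Longrightarrow> mirror t (mirror t p) = p"
  by (rule nth_equalityI) (auto simp: hverts_def)

lemma mirror_list_update:
  "i < d \<Longrightarrow> length p = d \<Longrightarrow> length t = d \<Longrightarrow>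
    mirror (t[i:=b]) (p[i:=v]) = (mirror t p)[i := mirror_coord b v]"
  by (rule nth_equalityI) (auto simp: nth_list_update)

lemma mirror_setC_in_calC:
  assumes t: "t \<in> Tset d" and p: "p \<in> setC n r d"
  shows "mirror t p \<in> calC n r d"
proof -
  have "length t = d" "length p = d"
    using t p by (simp_all add: Tset_def setC_def setA_def hverts_def)
  moreover have "t!i * (n - 1 - p!i) + (1 - t!i) * p!i = mirror_coord (t!i) (p!i)" if "i < d" for i
    using t that by (auto simp: Tset_def mirror_coord_def le_Suc_eq)
  ultimately have "mirror t p \<in> reflect n t (setC n r d)"
    using p mirror_hverts[of p t] unfolding reflect_def setC_def setA_def by auto
  then show ?thesis
    using t unfolding calC_def by blast
qed

lemma mirror_setC_infected: "t \<in> Tset d \<Longrightarrow> p \<in> setC n r d \<Longrightarrow> mirror t p \<in> infected"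
  using mirror_setC_in_calC subset_bp_closure by (rule subsetD[rotated])

(* Moving coordinate i of mirror t p to the other end of the range amounts to flipping t_i. Values
   at most rad at opposite ends never coincide, since 2 rad + 2 <= n. *)
lemma mirror_infected_by_neighbours:
  assumes t: "t \<in> Tset d" and p: "p \<in> hverts n d" and p_le: "\<And>i. i < d \<Longrightarrow> p!i \<le> rad"
    and K: "\<And>i. i < d \<Longrightarrow> K i \<subseteq> {..rad} - {p!i}"
    and L: "\<And>i. i < d \<Longrightarrow> L i \<subseteq> {..rad}"
    and K_infected: "\<And>i v. i < d \<Longrightarrow> v \<in> K i \<Longrightarrow> mirror t (p[i:=v]) \<in> infected"
    and L_infected: "\<And>i v. i < d \<Longrightarrow> v \<in> L i \<Longrightarrow> mirror (t[i := 1 - t!i]) (p[i:=v]) \<in> infected"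
    and r: "r \<le> (\<Sum>i<d. card (K i) + card (L i))"
  shows "mirror t p \<in> infected"
proof (rule hamming_bp_closure_activate[OF mirror_hverts[OF p]])
  have t_le: "t!i \<le> 1" if "i < d" for i
    using t that by (simp add: Tset_def)
  show "mirror_coord (t!i) ` K i \<union> mirror_coord (1 - t!i) ` L i \<subseteq> {..<n} - {mirror t p ! i}" if "i < d" for i
    using mirror_coord_two_sides_subset[OF t_le p_le K L] that by simp
  show "r \<le> (\<Sum>i<d. card (mirror_coord (t!i) ` K i \<union> mirror_coord (1 - t!i) ` L i))"
    using r card_mirror_coord_two_sides[OF t_le _ L] K by (simp add: subset_Diff_insert)
  have "length t = d" "length p = d"
    using t p by (simp_all add: Tset_def hverts_def)
  then have "(mirror t p)[i := mirror_coord b v] = mirror (t[i:=b]) (p[i:=v])" if "i < d" for i b v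
    using mirror_list_update[OF that] by simp
  then show "(mirror t p)[i:=v] \<in> infected"
    if "i < d" "v \<in> mirror_coord (t!i) ` K i \<union> mirror_coord (1 - t!i) ` L i" for i v
    using that K_infected L_infected by auto
qed

lemma mirror_setB_infected:
  assumes t: "t \<in> Tset d" and pA: "p \<in> setA n r d" and pB: "p \<in> setB n r d"
    and IH: "\<And>t' p'. t' \<in> Tset d \<Longrightarrow> p' \<in> setA n r d \<Longrightarrow>
      front_sum p < front_sum p' \<or> front_sum p' = front_sum p \<and> back_sum p' < back_sum p \<Longrightarrow>
      mirror t' p' \<in> infected"
  shows "mirror t p \<in> infected"
proof -
  define g f where "g = slack p" and "f = front_sum p div (d - 2)"
  have "front_sum p < (d - 2) * g"
    using pB mem_setB_iff_slack[OF pA] unfolding g_def by simp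
  then have "0 < d - 2"
    by (cases "d - 2") simp_all
  then have "f < g" and front_less: "front_sum p < (d - 2) * (f + 1)"
    using \<open>front_sum p < (d - 2) * g\<close> less_mult_imp_div_less[of "front_sum p" g "d - 2"]
      dividend_less_times_div[of "d - 2" "front_sum p"]
    unfolding f_def by (simp_all add: mult.commute)
  define S where "S i = {..<p!i} \<union> {p!i + g - f..p!i + g}" for i
  have back_infected: "mirror t' (p[i:=v]) \<in> infected"
    if t': "t' \<in> Tset d" and i: "2 \<le> i" "i < d" and v: "v \<in> S i" for t' i v
  proof (cases "v < p!i")
    case True
    then show ?thesis
      using IH[OF t'] list_update_back_setA[OF pA i True] by simp
  next
    case False
    then show ?thesis
      using v mirror_setC_infected[OF t' list_update_back_setC[OF pA i]] unfolding S_def g_def f_def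
      by auto
  qed
  have "r \<le> g + g + (\<Sum>i\<in>{2..<d}. card (S i) + card (S i))"
    using sum_card_back_values[OF \<open>f < g\<close>, of p] front_less r_le_double_rad pA
    unfolding S_def g_def slack_def mem_setA_iff by (simp add: sum.distrib)
  also have "\<dots> = (\<Sum>i<d. card (if i < 2 then {p!i<..p!i + g} else S i) + card (if i < 2 then {} else S i))"
    unfolding sum_lessThan_split_two[OF d_ge_2] by simp
  finally show ?thesis
  proof (rule mirror_infected_by_neighbours[OF t, rotated -1])
    show "p \<in> hverts n d"
      using pA by (simp add: mem_setA_iff)
    fix i assume "i < d"
    then have "p!i + g \<le> rad"
      using nth_add_slack_le_rad[OF pA] unfolding g_def by simp
    then show "p!i \<le> rad" and "(if i < 2 then {p!i<..p!i + g} else S i) \<subseteq> {..rad} - {p!i}"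
      and "(if i < 2 then {} else S i) \<subseteq> {..rad}"
      using \<open>f < g\<close> unfolding S_def by auto
    fix v
    show "v \<in> (if i < 2 then {p!i<..p!i + g} else S i) \<Longrightarrow> mirror t (p[i:=v]) \<in> infected"
      using IH[OF t] list_update_front_setA[OF pA] back_infected[OF t] \<open>i < d\<close>
      unfolding g_def by (auto split: if_splits)
    show "v \<in> (if i < 2 then {} else S i) \<Longrightarrow> mirror (t[i := 1 - t!i]) (p[i:=v]) \<in> infected"
      using back_infected Tset_list_update[OF t] \<open>i < d\<close> by (simp split: if_splits)
  qed
qed

lemma mirror_setA_infected:
  assumes "t \<in> Tset d" "p \<in> setA n r d"
  shows "mirror t p \<in> infected"
  using assms
proof (induction p arbitrary: t rule: wf_induct[OF wf_measures[of "[(\<lambda>p. rad - front_sum p), back_sum]"]])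
  case (1 p)
  show ?case
  proof (cases "p \<in> setB n r d")
    case False
    then show ?thesis
      using 1(2,3) mirror_setC_infected unfolding setC_def by blast
  next
    case True
    show ?thesis
    proof (rule mirror_setB_infected[OF 1(2,3) True])
      fix t' p'
      assume "t' \<in> Tset d" "p' \<in> setA n r d"
        and "front_sum p < front_sum p' \<or> front_sum p' = front_sum p \<and> back_sum p' < back_sum p"
      then show "mirror t' p' \<in> infected"
        using 1(1) by (auto simp: mem_setA_iff)
    qed
  qed
qed

definition depth :: "nat \<Rightarrow> nat" where
  "depth v = min v (n - 1 - v)"

definition back_depth :: "nat list \<Rightarrow> nat" where
  "back_depth y = (\<Sum>i\<in>{2..<d}. depth (y!i))"

lemma corner_infected:
  assumes y: "y \<in> hverts n d" and b: "b \<le> 1"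
    and near: "mirror_coord b (y!0) + mirror_coord b (y!1) + back_depth y \<le> rad"
  shows "y \<in> infected"
proof -
  define t where "t = map (\<lambda>i. if i < 2 then b else if y!i \<le> n - 1 - y!i then 0 else 1) [0..<d]"
  have t: "t \<in> Tset d"
    unfolding t_def Tset_def using b d_ge_2 by auto
  have "(\<Sum>i<d. mirror t y ! i) = mirror_coord b (y!0) + mirror_coord b (y!1) + back_depth y"
    unfolding sum_lessThan_split_two[OF d_ge_2] back_depth_def
    using d_ge_2 by (auto simp: t_def mirror_coord_def depth_def intro!: sum.cong)
  then have "mirror t y \<in> setA n r d"
    using near mirror_hverts[OF y]
    unfolding mem_setA_iff front_sum_def back_sum_def sum_lessThan_split_two[OF d_ge_2] by simp
  then show ?thesis
    using mirror_setA_infected[OF t] mirror_mirror[OF y] by metis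
qed

section \<open>Percolation of the whole grid\<close>

definition depth_sum :: "nat list \<Rightarrow> nat" where
  "depth_sum y = (\<Sum>i<d. depth (y!i))"

definition shallower :: "nat \<Rightarrow> nat set" where
  "shallower a = {v. v < n \<and> depth v < a}"

lemma depth_sum_eq: "depth_sum y = depth (y!0) + depth (y!1) + back_depth y"
  unfolding depth_sum_def back_depth_def by (rule sum_lessThan_split_two[OF d_ge_2])

lemma depth_sum_update: "i < d \<Longrightarrow> length y = d \<Longrightarrow> depth_sum (y[i:=v]) + depth (y!i) = depth_sum y + depth v"
  unfolding depth_sum_def using sum_nth_list_update[of i "{..<d}" y depth v] by simp

lemma back_depth_update_front: "i < 2 \<Longrightarrow> back_depth (y[i:=v]) = back_depth y"
  unfolding back_depth_def by (rule sum.cong) auto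

lemma depth_mirror_coord: "v < n \<Longrightarrow> depth (mirror_coord b v) = depth v"
  by (simp add: depth_def mirror_coord_def min.commute)

lemma depth_eq_mirror_coord: "v < n \<Longrightarrow> mirror_coord b v \<le> rad \<Longrightarrow> depth v = mirror_coord b v"
  using double_rad_less_n by (auto simp: depth_def mirror_coord_def split: if_splits)

lemma ex_mirror_coord_eq_depth: "\<exists>b \<le> 1. mirror_coord b v = depth v"
  by (rule exI[of _ "if v \<le> n - 1 - v then 0 else 1"]) (simp add: mirror_coord_def depth_def)

lemma double_depth_le: "2 * depth v \<le> n"
  by (simp add: depth_def)

lemma shallower_depth_subset: "shallower (depth w) \<subseteq> {..<n} - {w}"
  by (auto simp: shallower_def)

lemma card_shallower:
  assumes "2 * a \<le> n"
  shows "card (shallower a) = 2 * a"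
proof -
  have "shallower a = {..<a} \<union> {n - a..<n}"
    using assms by (auto simp: shallower_def depth_def)
  moreover have "{..<a} \<inter> {n - a..<n} = {}"
    using assms by auto
  ultimately show ?thesis
    using assms by (simp add: card_Un_disjoint)
qed

lemma list_update_shallower_infected:
  assumes y: "y \<in> hverts n d" and i: "i < d" and v: "v \<in> shallower (depth (y!i))"
    and shallower_infected: "\<And>z. z \<in> hverts n d \<Longrightarrow> depth_sum z < depth_sum y \<Longrightarrow> z \<in> infected"
  shows "y[i:=v] \<in> infected"
proof (rule shallower_infected)
  show "y[i:=v] \<in> hverts n d"
    using v list_update_hverts[OF y] by (simp add: shallower_def)
  show "depth_sum (y[i:=v]) < depth_sum y"
    using depth_sum_update[OF i length_hverts[OF y], of v] v by (simp add: shallower_def)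
qed

lemma infected_by_shallower_neighbours:
  assumes y: "y \<in> hverts n d"
    and shallower_infected: "\<And>z. z \<in> hverts n d \<Longrightarrow> depth_sum z < depth_sum y \<Longrightarrow> z \<in> infected"
    and J: "\<And>i. i < 2 \<Longrightarrow> J i \<subseteq> {..<n} - {y!i}"
    and J_infected: "\<And>i v. i < 2 \<Longrightarrow> v \<in> J i \<Longrightarrow> y[i:=v] \<in> infected"
    and r: "r \<le> card (J 0) + card (J 1) + 2 * back_depth y"
  shows "y \<in> infected"
proof (rule hamming_bp_closure_activate[OF y, of "\<lambda>i. if i < 2 then J i else shallower (depth (y!i))"])
  fix i assume "i < d"
  show "(if i < 2 then J i else shallower (depth (y!i))) \<subseteq> {..<n} - {y!i}"
    using J shallower_depth_subset by simp
  show "y[i:=v] \<in> infected" if "v \<in> (if i < 2 then J i else shallower (depth (y!i)))" for v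
    using that J_infected list_update_shallower_infected[OF y \<open>i < d\<close> _ shallower_infected]
    by (simp split: if_splits)
next
  have "(\<Sum>i\<in>{2..<d}. card (shallower (depth (y!i)))) = 2 * back_depth y"
    using card_shallower[OF double_depth_le] by (simp add: back_depth_def sum_distrib_left)
  then show "r \<le> (\<Sum>i<d. card (if i < 2 then J i else shallower (depth (y!i))))"
    using r unfolding sum_lessThan_split_two[OF d_ge_2] by simp
qed

lemma front_neighbour_infected:
  assumes y: "y \<in> hverts n d" and i: "i < 2" and b: "b \<le> 1"
    and near: "mirror_coord b (y!i) + mirror_coord (1 - b) (y!(1 - i)) + back_depth y \<le> rad"
    and shallower_infected: "\<And>z. z \<in> hverts n d \<Longrightarrow> depth_sum z < depth_sum y \<Longrightarrow> z \<in> infected"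
    and w: "w < n" "w < mirror_coord b (y!i) \<or> n - 1 - w + mirror_coord (1 - b) (y!(1 - i)) + back_depth y \<le> rad"
  shows "y[i := mirror_coord b w] \<in> infected"
proof -
  have "i < d" "1 - i < d" "1 - i \<noteq> i"
    using i d_ge_2 by (auto simp: less_2_cases_iff)
  then have "y!i < n" and z_i: "y[i := mirror_coord b w] ! i = mirror_coord b w"
    and z_j: "y[i := mirror_coord b w] ! (1 - i) = y!(1 - i)"
    using y by (simp_all add: hverts_def)
  show ?thesis
  proof (cases "w < mirror_coord b (y!i)")
    case True
    moreover have "depth (y!i) = mirror_coord b (y!i)"
      using near depth_eq_mirror_coord[OF \<open>y!i < n\<close>] by simp
    moreover have "depth w \<le> w"
      by (simp add: depth_def)
    ultimately have "depth w < depth (y!i)"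
      by linarith
    then show ?thesis
      using list_update_shallower_infected[OF y \<open>i < d\<close> _ shallower_infected] mirror_coord_less[OF w(1)]
      by (simp add: shallower_def depth_mirror_coord w(1))
  next
    case False
    then have "mirror_coord (1 - b) (y[i := mirror_coord b w] ! i)
        + mirror_coord (1 - b) (y[i := mirror_coord b w] ! (1 - i)) + back_depth (y[i := mirror_coord b w]) \<le> rad"
      using w z_i z_j mirror_coord_opposite[OF b w(1)] back_depth_update_front[OF i] by simp
    then have "mirror_coord (1 - b) (y[i := mirror_coord b w] ! 0)
        + mirror_coord (1 - b) (y[i := mirror_coord b w] ! 1) + back_depth (y[i := mirror_coord b w]) \<le> rad"
      using i by (auto simp: less_2_cases_iff)
    then show ?thesis
      using corner_infected[OF list_update_hverts[OF y mirror_coord_less[OF w(1)]], of "1 - b"] by simp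
  qed
qed

lemma opposite_sides_infected:
  assumes y: "y \<in> hverts n d" and b: "b \<le> 1"
    and near: "mirror_coord b (y!0) + mirror_coord (1 - b) (y!1) + back_depth y \<le> rad"
    and shallower_infected: "\<And>z. z \<in> hverts n d \<Longrightarrow> depth_sum z < depth_sum y \<Longrightarrow> z \<in> infected"
  shows "y \<in> infected"
proof -
  define c :: "nat \<Rightarrow> nat" where "c i = (if i = 0 then b else 1 - b)" for i
  define a where "a i = mirror_coord (c i) (y!i)" for i
  define s where "s = rad - back_depth y"
  define X where "X i = {..<a i} \<union> {n - 1 - (s - a (1 - i))..<n}" for i
  have near_i: "mirror_coord (c i) (y!i) + mirror_coord (1 - c i) (y!(1 - i)) + back_depth y \<le> rad"
    and a_le: "a i + a (1 - i) \<le> s" if "i < 2" for i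
    using that near b unfolding a_def c_def s_def by (auto simp: less_2_cases_iff)
  have X: "X i \<subseteq> {..<n}" "a i \<notin> X i" if "i < 2" for i
    using a_le[OF that] double_rad_less_n unfolding X_def s_def by auto
  have card_X: "card (X i) = a i + (s - a (1 - i) + 1)" if "i < 2" for i
    using a_le[OF that] double_rad_less_n unfolding X_def s_def by (subst card_Un_disjoint) auto
  show ?thesis
  proof (rule infected_by_shallower_neighbours[OF y shallower_infected, of "\<lambda>i. mirror_coord (c i) ` X i"])
    fix i :: nat assume "i < 2"
    have "y!i < n"
      using y \<open>i < 2\<close> d_ge_2 by (simp add: hverts_def)
    then have "a i < n"
      unfolding a_def by (rule mirror_coord_less)
    then show "mirror_coord (c i) ` X i \<subseteq> {..<n} - {y!i}"
      using mirror_coord_image_subset[OF X(1)[OF \<open>i < 2\<close>] _ X(2)[OF \<open>i < 2\<close>], where b = "c i"] \<open>y!i < n\<close>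
      unfolding a_def by simp
    fix v assume "v \<in> mirror_coord (c i) ` X i"
    then obtain w where v: "v = mirror_coord (c i) w" and "w \<in> X i"
      by blast
    then have "w < n" and "w < a i \<or> n - 1 - (s - a (1 - i)) \<le> w"
      using X(1)[OF \<open>i < 2\<close>] unfolding X_def by auto
    then have "w < a i \<or> n - 1 - w + a (1 - i) + back_depth y \<le> rad"
      using a_le[OF \<open>i < 2\<close>] near double_rad_less_n unfolding s_def by (elim disjE) linarith+
    moreover have "c i \<le> 1" and "1 - c i = c (1 - i)"
      using b \<open>i < 2\<close> unfolding c_def by auto
    ultimately show "y[i:=v] \<in> infected"
      unfolding v a_def
      using front_neighbour_infected[OF y \<open>i < 2\<close> _ near_i[OF \<open>i < 2\<close>] shallower_infected \<open>w < n\<close>]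
      by simp
  next
    show "r \<le> card (mirror_coord (c 0) ` X 0) + card (mirror_coord (c 1) ` X 1) + 2 * back_depth y"
      using X card_X a_le r_le_double_rad card_mirror_coord_image unfolding s_def by simp
  qed
qed

lemma all_infected: "y \<in> hverts n d \<Longrightarrow> y \<in> infected"
proof (induction "depth_sum y" arbitrary: y rule: less_induct)
  case less
  note y = less.prems
  have shallower_infected: "\<And>z. z \<in> hverts n d \<Longrightarrow> depth_sum z < depth_sum y \<Longrightarrow> z \<in> infected"
    using less.hyps by blast
  obtain b0 b1 where b: "b0 \<le> 1" "b1 \<le> 1"
    and sides: "mirror_coord b0 (y!0) = depth (y!0)" "mirror_coord b1 (y!1) = depth (y!1)"
    using ex_mirror_coord_eq_depth by metis
  have "b1 = b0 \<or> b1 = 1 - b0"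
    using b by auto
  then consider (deep) "rad < depth_sum y"
    | (same_side) "mirror_coord b0 (y!0) + mirror_coord b0 (y!1) + back_depth y \<le> rad"
    | (opposite_sides) "mirror_coord b0 (y!0) + mirror_coord (1 - b0) (y!1) + back_depth y \<le> rad"
    using sides depth_sum_eq[of y] by (cases "rad < depth_sum y") auto
  then show ?case
  proof cases
    case deep
    show ?thesis
    proof (rule infected_by_shallower_neighbours[OF y shallower_infected])
      show "shallower (depth (y!i)) \<subseteq> {..<n} - {y!i}" for i
        by (rule shallower_depth_subset)
      show "y[i:=v] \<in> infected" if "i < 2" "v \<in> shallower (depth (y!i))" for i v
        using that d_ge_2 list_update_shallower_infected[OF y _ _ shallower_infected] by simp
      show "r \<le> card (shallower (depth (y!0))) + card (shallower (depth (y!1))) + 2 * back_depth y"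
        using deep r_le_double_rad depth_sum_eq[of y] card_shallower[OF double_depth_le] by simp
    qed
  next
    case same_side
    then show ?thesis
      by (rule corner_infected[OF y b(1)])
  next
    case opposite_sides
    then show ?thesis
      by (rule opposite_sides_infected[OF y b(1) _ shallower_infected])
  qed
qed

end

theorem lemma4p2:
  fixes n r d :: nat
  assumes "r \<ge> 1" and "n \<ge> r + 1" and "d \<ge> 2"
  shows "percolating (hverts n d) (hadj d) r (calC n r d)"
proof -
  interpret hamming_percolation n r d
    using assms by unfold_locales
  show ?thesis
    using calC_subset_hverts all_infected by (intro percolatingI) auto
qed

end
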